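(* For each $n\ge2$ there exists a constant $\beta_n>0$, depending only on $n$, such that for every lattice $\Lambda\subset\mathbb R^n$ and every special basis $(u_1,\dots,u_n)$ of $\Lambda$, the flat torus $\mathbb R^n/\Lambda$ satisfies $\mathrm{diam}(\mathbb R^n/\Lambda)\ge\beta_n|u_1|$.
   Context: For nonzero $v$ and a nontrivial subspace $W\subset\mathbb R^n$, $\mathrm{ang}(v,W)$ is the minimum angle between $v$ and nonzero vectors of $W$. Let $\theta_n=\arcsin(2^{-n(n-1)/4})$. Say a $\mathbb Z$-basis $v_1,\dots,v_n$ of a lattice $\Lambda$ satisfies the angle condition if $\mathrm{ang}(v_i,\mathrm{span}_{\mathbb R}\{v_j:j\neq i\})\ge\theta_n$ for all $i$ (such bases always exist). Let $R_0(\Lambda)$ be the minimal $r>0$ such that the closed ball of radius $r$ centered at $0$ contains a $\mathbb Z$-basis of $\Lambda$ satisfying the angle condition. A special basis of $\Lambda$ is an ordered $\mathbb Z$-basis $(u_1,\dots,u_n)$ satisfying the angle condition, contained in that closed ball of radius $R_0(\Lambda)$, ordered so that $|u_1|\ge|u_2|\ge\dots\ge|u_n|$, and minimal among all such ordered bases for the lexicographic order of the tuples $(|u_1|,\dots,|u_n|)$. The diameter of $\mathbb R^n/\Lambda$ is with respect to the flat metric induced from Euclidean $\mathbb R^n$. *)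

theory Defs
  imports "HOL-Analysis.Analysis"
begin

text \<open>Vectors of R^n are elements of real^'n, with n = CARD('n).
  Ordered families of n vectors (u_1,...,u_n) are functions nat => real^'n,
  where u_{i+1} is u i for i < n (0-based indexing).\<close>

definition vec_angle :: "real^'n \<Rightarrow> real^'n \<Rightarrow> real" where
  "vec_angle v w = arccos ((v \<bullet> w) / (norm v * norm w))"

definition ang :: "real^'n \<Rightarrow> (real^'n) set \<Rightarrow> real" where
  "ang v W = Inf {vec_angle v w | w. w \<in> W \<and> w \<noteq> 0}"

definition theta :: "nat \<Rightarrow> real" where
  "theta n = arcsin (2 powr (- (real n * (real n - 1) / 4)))"

definition lattice_gen :: "(nat \<Rightarrow> real^'n) \<Rightarrow> (real^'n) set" where
  "lattice_gen b = {(\<Sum>i<CARD('n). of_int (k i) *\<^sub>R b i) | k :: nat \<Rightarrow> int. True}"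

definition lin_indep_fam :: "(nat \<Rightarrow> real^'n) \<Rightarrow> bool" where
  "lin_indep_fam b \<longleftrightarrow>
     (\<forall>c :: nat \<Rightarrow> real. (\<Sum>i<CARD('n). c i *\<^sub>R b i) = 0 \<longrightarrow> (\<forall>i<CARD('n). c i = 0))"

definition is_lattice :: "(real^'n) set \<Rightarrow> bool" where
  "is_lattice L \<longleftrightarrow> (\<exists>b. lin_indep_fam b \<and> L = lattice_gen b)"

definition is_Zbasis :: "(real^'n) set \<Rightarrow> (nat \<Rightarrow> real^'n) \<Rightarrow> bool" where
  "is_Zbasis L b \<longleftrightarrow> lin_indep_fam b \<and> lattice_gen b = L"

definition angle_cond :: "(nat \<Rightarrow> real^'n) \<Rightarrow> bool" where
  "angle_cond b \<longleftrightarrow>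
     (\<forall>i<CARD('n). ang (b i) (span (b ` ({..<CARD('n)} - {i}))) \<ge> theta CARD('n))"

definition R0 :: "(real^'n) set \<Rightarrow> real" where
  "R0 L = Inf {r. r > 0 \<and> (\<exists>b. is_Zbasis L b \<and> angle_cond b \<and>
                              (\<forall>i<CARD('n). norm (b i) \<le> r))}"

definition norms_list :: "(nat \<Rightarrow> real^'n) \<Rightarrow> real list" where
  "norms_list b = map (\<lambda>i. norm (b i)) [0..<CARD('n)]"

definition lex_le :: "real list \<Rightarrow> real list \<Rightarrow> bool" where
  "lex_le xs ys \<longleftrightarrow> xs = ys \<or> (xs, ys) \<in> lexord {(a, b). a < b}"

definition admissible_ordered :: "(real^'n) set \<Rightarrow> (nat \<Rightarrow> real^'n) \<Rightarrow> bool" where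
  "admissible_ordered L b \<longleftrightarrow> is_Zbasis L b \<and> angle_cond b \<and>
     (\<forall>i<CARD('n). norm (b i) \<le> R0 L) \<and>
     (\<forall>i j. i \<le> j \<longrightarrow> j < CARD('n) \<longrightarrow> norm (b j) \<le> norm (b i))"

definition special_basis :: "(real^'n) set \<Rightarrow> (nat \<Rightarrow> real^'n) \<Rightarrow> bool" where
  "special_basis L u \<longleftrightarrow> admissible_ordered L u \<and>
     (\<forall>v. admissible_ordered L v \<longrightarrow> lex_le (norms_list u) (norms_list v))"

definition torus_dist :: "(real^'n) set \<Rightarrow> real^'n \<Rightarrow> real^'n \<Rightarrow> real" where
  "torus_dist L x y = Inf {norm (x - y - l) | l. l \<in> L}"

definition torus_diam :: "(real^'n) set \<Rightarrow> real" where
  "torus_diam L = Sup {torus_dist L x y | x y. True}"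

end

theory Submission imports Defs begin

text \<open>Write \<open>s = sin \<theta>\<^sub>n\<close>. The angle condition says that \<open>u\<^sub>1\<close> makes angle at least
  \<open>\<theta>\<^sub>n\<close> with the span \<open>W\<close> of the other basis vectors, so \<open>|u\<^sub>1 - w| \<ge> s |u\<^sub>1|\<close> for
  all \<open>w \<in> W\<close>. A lattice point is \<open>k u\<^sub>1 + w\<close> with \<open>k\<close> an integer and \<open>w \<in> W\<close>, and
  \<open>|1/2 - k| \<ge> 1/2\<close>, so the point \<open>u\<^sub>1/2\<close> has distance at least \<open>s |u\<^sub>1| / 2\<close> from
  every lattice point. Hence the diameter is at least \<open>\<beta>\<^sub>n |u\<^sub>1|\<close> with
  \<open>\<beta>\<^sub>n = s / 2\<close>; torus distances are bounded by \<open>\<Sum> |u\<^sub>i|\<close>, so the supremum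
  defining the diameter is finite.\<close>

lemma abs_inner_div_norms_le_1:
  fixes v w :: "'a::real_inner"
  shows "\<bar>(v \<bullet> w) / (norm v * norm w)\<bar> \<le> 1"
  by (cases "v = 0 \<or> w = 0")
     (auto simp: abs_div divide_le_eq_1 Cauchy_Schwarz_ineq2)

lemma vec_angle_bounds: "0 \<le> vec_angle v w" "vec_angle v w \<le> pi"
  using abs_inner_div_norms_le_1[of v w, unfolded abs_le_iff] unfolding vec_angle_def
  by (auto intro!: arccos_lbound arccos_ubound)

lemma cos_vec_angle: "cos (vec_angle v w) = (v \<bullet> w) / (norm v * norm w)"
  using abs_inner_div_norms_le_1[of v w, unfolded abs_le_iff] unfolding vec_angle_def
  by (intro cos_arccos) auto

lemma ang_le_vec_angle:
  assumes "w \<in> W" "w \<noteq> 0"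
  shows "ang v W \<le> vec_angle v w"
  unfolding ang_def using assms vec_angle_bounds(1)
  by (intro cInf_lower) (auto intro!: bdd_belowI[where m=0])

lemma abs_inner_le_cos_ang:
  assumes "subspace W" "w \<in> W" "0 \<le> t" "t \<le> pi" "t \<le> ang v W"
  shows "\<bar>v \<bullet> w\<bar> \<le> cos t * (norm v * norm w)"
proof (cases "v = 0 \<or> w = 0")
  case True then show ?thesis by auto
next
  case False
  have cos_le: "(v \<bullet> x) / (norm v * norm x) \<le> cos t" if "x \<in> W" "x \<noteq> 0" for x
  proof -
    have "t \<le> vec_angle v x" using ang_le_vec_angle[OF that, of v] assms(5) by linarith
    then have "cos (vec_angle v x) \<le> cos t"
      using assms(3) vec_angle_bounds(2) by (intro cos_monotone_0_pi_le) auto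
    then show ?thesis by (simp add: cos_vec_angle)
  qed
  have "(v \<bullet> w) / (norm v * norm w) \<le> cos t" "- ((v \<bullet> w) / (norm v * norm w)) \<le> cos t"
    using cos_le[of w] cos_le[of "- w"] assms(1,2) False by (auto simp: subspace_neg)
  then have "\<bar>(v \<bullet> w) / (norm v * norm w)\<bar> \<le> cos t" by linarith
  then show ?thesis using False by (simp add: abs_div divide_le_eq)
qed

lemma norm_diff_sq_ge_of_abs_inner_le:
  fixes v w :: "'a::real_inner"
  assumes "0 \<le> C" "\<bar>v \<bullet> w\<bar> \<le> C * (norm v * norm w)"
  shows "(1 - C\<^sup>2) * (norm v)\<^sup>2 \<le> (norm (v - w))\<^sup>2"
proof -
  have "(norm (v - w))\<^sup>2 = (norm v)\<^sup>2 - 2 * (v \<bullet> w) + (norm w)\<^sup>2"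
    by (simp add: power2_norm_eq_inner inner_diff algebra_simps inner_commute)
  moreover have "2 * (C * norm v * norm w) \<le> C\<^sup>2 * (norm v)\<^sup>2 + (norm w)\<^sup>2"
    using sum_squares_bound[of "C * norm v" "norm w"] by (simp add: power_mult_distrib)
  ultimately show ?thesis using assms(2) by (simp add: algebra_simps)
qed

lemma sin_mult_norm_le_norm_diff_subspace:
  assumes "subspace W" "w \<in> W" "0 \<le> t" "t \<le> pi / 2" "t \<le> ang v W"
  shows "sin t * norm v \<le> norm (v - w)"
proof -
  have "0 \<le> cos t" using assms(3,4) by (intro cos_ge_zero) auto
  moreover have "\<bar>v \<bullet> w\<bar> \<le> cos t * (norm v * norm w)"
    using assms by (intro abs_inner_le_cos_ang) auto
  ultimately have "(sin t * norm v)\<^sup>2 \<le> (norm (v - w))\<^sup>2"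
    using norm_diff_sq_ge_of_abs_inner_le by (fastforce simp: sin_squared_eq power_mult_distrib)
  then show ?thesis by (simp add: power2_le_iff_abs_le)
qed

lemma lin_indep_fam_inj:
  fixes b :: "nat \<Rightarrow> real^'n"
  assumes "lin_indep_fam b"
  shows "inj_on b {..<CARD('n)}"
proof (rule inj_onI, rule ccontr)
  fix i j assume ij: "i \<in> {..<CARD('n)}" "j \<in> {..<CARD('n)}" "b i = b j" "i \<noteq> j"
  define c where "c k = (if k = i then 1 else if k = j then -1 else (0::real))" for k
  have "c k *\<^sub>R b k = (if k = i then b k else 0) - (if k = j then b k else 0)" for k
    using ij unfolding c_def by auto
  then have "(\<Sum>k<CARD('n). c k *\<^sub>R b k) = 0"
    using ij by (simp add: sum_subtractf)
  then have "c i = 0" using assms ij unfolding lin_indep_fam_def by blast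
  then show False unfolding c_def by simp
qed

lemma lin_indep_fam_span:
  fixes b :: "nat \<Rightarrow> real^'n"
  assumes "lin_indep_fam b"
  shows "span (b ` {..<CARD('n)}) = UNIV"
proof -
  note inj = lin_indep_fam_inj[OF assms]
  have "independent (b ` {..<CARD('n)})"
  proof
    assume "dependent (b ` {..<CARD('n)})"
    then obtain a where a: "\<exists>v\<in>b ` {..<CARD('n)}. a v \<noteq> 0"
      "(\<Sum>v\<in>b ` {..<CARD('n)}. a v *\<^sub>R v) = 0"
      by (subst (asm) dependent_finite) auto
    have "(\<Sum>i<CARD('n). a (b i) *\<^sub>R b i) = 0"
      using a(2) by (simp add: sum.reindex[OF inj])
    then show False
      using assms a(1) unfolding lin_indep_fam_def by (auto dest!: spec[of _ "\<lambda>i. a (b i)"])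
  qed
  then have "UNIV \<subseteq> span (b ` {..<CARD('n)})"
    by (intro card_ge_dim_independent) (simp_all add: card_image[OF inj])
  then show ?thesis by auto
qed

lemma lin_indep_fam_coordinates:
  fixes b :: "nat \<Rightarrow> real^'n"
  assumes "lin_indep_fam b"
  obtains c where "x = (\<Sum>i<CARD('n). c i *\<^sub>R b i)"
proof -
  note inj = lin_indep_fam_inj[OF assms]
  have "x \<in> span (b ` {..<CARD('n)})" using lin_indep_fam_span[OF assms] by simp
  then obtain a where "x = (\<Sum>v\<in>b ` {..<CARD('n)}. a v *\<^sub>R v)"
    by (auto simp: span_finite)
  then have "x = (\<Sum>i<CARD('n). a (b i) *\<^sub>R b i)" by (simp add: sum.reindex[OF inj])
  then show thesis by (rule that)
qed

lemma torus_dist_le_sum_norms: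
  fixes b :: "nat \<Rightarrow> real^'n"
  assumes "lin_indep_fam b"
  shows "torus_dist (lattice_gen b) x y \<le> (\<Sum>i<CARD('n). norm (b i))"
proof -
  obtain c where c: "x - y = (\<Sum>i<CARD('n). c i *\<^sub>R b i)"
    using lin_indep_fam_coordinates[OF assms] .
  define l where "l = (\<Sum>i<CARD('n). of_int \<lfloor>c i\<rfloor> *\<^sub>R b i)"
  have "l \<in> lattice_gen b" unfolding l_def lattice_gen_def by (auto intro: exI[of _ "\<lambda>i. \<lfloor>c i\<rfloor>"])
  then have "torus_dist (lattice_gen b) x y \<le> norm (x - y - l)"
    unfolding torus_dist_def by (intro cInf_lower) (auto intro!: bdd_belowI[where m=0])
  also have "x - y - l = (\<Sum>i<CARD('n). (c i - of_int \<lfloor>c i\<rfloor>) *\<^sub>R b i)"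
    unfolding c l_def by (simp add: sum_subtractf scaleR_diff_left)
  also have "norm \<dots> \<le> (\<Sum>i<CARD('n). norm ((c i - of_int \<lfloor>c i\<rfloor>) *\<^sub>R b i))"
    by (rule norm_sum)
  also have "\<dots> \<le> (\<Sum>i<CARD('n). norm (b i))"
  proof (rule sum_mono)
    fix i
    have "0 \<le> c i - of_int \<lfloor>c i\<rfloor>" "c i - of_int \<lfloor>c i\<rfloor> \<le> 1" by linarith+
    then show "norm ((c i - of_int \<lfloor>c i\<rfloor>) *\<^sub>R b i) \<le> norm (b i)"
      by (simp add: mult_left_le_one_le)
  qed
  finally show ?thesis .
qed

lemma torus_dist_le_torus_diam:
  fixes b :: "nat \<Rightarrow> real^'n"
  assumes "lin_indep_fam b"
  shows "torus_dist (lattice_gen b) x y \<le> torus_diam (lattice_gen b)"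
  unfolding torus_diam_def using torus_dist_le_sum_norms[OF assms]
  by (intro cSup_upper) (auto intro!: bdd_aboveI[where M="\<Sum>i<CARD('n). norm (b i)"])

lemma norm_half_minus_lattice_point_ge:
  assumes "subspace W" "w \<in> W" "0 \<le> t" "t \<le> pi / 2" "t \<le> ang v W"
  shows "sin t / 2 * norm v \<le> norm ((1/2) *\<^sub>R v - (of_int k *\<^sub>R v + w))"
proof -
  define c where "c = 1/2 - real_of_int k"
  have "real_of_int k \<le> 0 \<or> 1 \<le> real_of_int k" by (cases "k \<le> 0") simp_all
  then have c: "1/2 \<le> \<bar>c\<bar>" unfolding c_def by arith
  have "(1/2) *\<^sub>R v - (of_int k *\<^sub>R v + w) = c *\<^sub>R (v - (1/c) *\<^sub>R w)"
    using c unfolding c_def by (auto simp: algebra_simps)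
  then have eq: "norm ((1/2) *\<^sub>R v - (of_int k *\<^sub>R v + w)) = \<bar>c\<bar> * norm (v - (1/c) *\<^sub>R w)"
    by simp
  have "sin t * norm v \<le> norm (v - (1/c) *\<^sub>R w)"
    using assms by (intro sin_mult_norm_le_norm_diff_subspace) (auto simp: subspace_scale)
  then have "1/2 * (sin t * norm v) \<le> \<bar>c\<bar> * norm (v - (1/c) *\<^sub>R w)"
    using c sin_ge_zero[of t] assms(3,4) by (intro mult_mono) auto
  then show ?thesis unfolding eq by simp
qed

lemma theta_bounds: "0 < theta n" "theta n \<le> pi / 2"
proof -
  define s :: real where "s = 2 powr (- (real n * (real n - 1) / 4))"
  have "0 \<le> real n * (real n - 1)" by (cases n) auto
  then have "s \<le> 2 powr 0" unfolding s_def by (intro powr_mono) auto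
  then have "0 < s" "s \<le> 1" unfolding s_def by auto
  then show "0 < theta n" "theta n \<le> pi / 2"
    unfolding theta_def s_def[symmetric] using arcsin_less_arcsin[of 0 s] arcsin_ubound[of s] by auto
qed

lemma torus_dist_half_basis_vector_ge:
  fixes u :: "nat \<Rightarrow> real^'n"
  assumes "angle_cond u" "i < CARD('n)"
  shows "sin (theta CARD('n)) / 2 * norm (u i) \<le> torus_dist (lattice_gen u) ((1/2) *\<^sub>R u i) 0"
proof -
  let ?W = "span (u ` ({..<CARD('n)} - {i}))"
  have ang: "theta CARD('n) \<le> ang (u i) ?W"
    using assms unfolding angle_cond_def by blast
  have "lattice_gen u \<noteq> {}" unfolding lattice_gen_def by blast
  moreover have "sin (theta CARD('n)) / 2 * norm (u i) \<le> norm ((1/2) *\<^sub>R u i - l)"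
    if lattice_point: "l \<in> lattice_gen u" for l
  proof -
    obtain k where "l = (\<Sum>j<CARD('n). of_int (k j) *\<^sub>R u j)"
      using lattice_point unfolding lattice_gen_def by blast
    then have l: "l = of_int (k i) *\<^sub>R u i + (\<Sum>j\<in>{..<CARD('n)} - {i}. of_int (k j) *\<^sub>R u j)"
      using assms(2) by (simp add: sum.remove)
    have "(\<Sum>j\<in>{..<CARD('n)} - {i}. of_int (k j) *\<^sub>R u j) \<in> ?W"
      by (intro span_sum span_scale span_base) auto
    from norm_half_minus_lattice_point_ge[OF subspace_span this _ _ ang]
    show ?thesis unfolding l using theta_bounds[of "CARD('n)"] by simp
  qed
  ultimately show ?thesis
    unfolding torus_dist_def by (intro cInf_greatest) auto
qed

theorem mainTheorem17:
  assumes "CARD('n) \<ge> 2"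
  shows "\<exists>\<beta>>0. \<forall>(L :: (real^'n) set) u.
           is_lattice L \<and> special_basis L u \<longrightarrow> torus_diam L \<ge> \<beta> * norm (u 0)"
proof (intro exI conjI allI impI)
  show "0 < sin (theta CARD('n)) / 2"
    using theta_bounds[of "CARD('n)"] by (auto intro: sin_gt_zero)
  fix L :: "(real^'n) set" and u
  assume "is_lattice L \<and> special_basis L u"
  then have u: "lin_indep_fam u" "angle_cond u" and L: "L = lattice_gen u"
    unfolding special_basis_def admissible_ordered_def is_Zbasis_def by auto
  show "sin (theta CARD('n)) / 2 * norm (u 0) \<le> torus_diam L"
    unfolding L using torus_dist_half_basis_vector_ge[OF u(2)] torus_dist_le_torus_diam[OF u(1)]
    by (rule order_trans) simp
qed

end
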